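(* Let $\mathfrak n$ be a finite-dimensional real two-step nilpotent Lie algebra with center $\mathfrak z$, and let $n=\dim\mathfrak n-\dim\mathfrak z$. If $n\ge3$ and $2\dim[\mathfrak n,\mathfrak n]=n(n-1)$, then $\mathfrak n$ does not admit an abelian complex structure. In particular, free two-step nilpotent Lie algebras of rank $n\ge3$ (those with $\mathfrak z=[\mathfrak n,\mathfrak n]$ and $2\dim\mathfrak z=n(n-1)$) admit no abelian complex structure.
   Context: An abelian complex structure on a real Lie algebra $\mathfrak g$ is a linear map $J$ with $J^2=-\mathrm{Id}$ and $[Jx,Jy]=[x,y]$ for all $x,y\in\mathfrak g$. *)

theory Defs
  imports "HOL-Analysis.Analysis"
begin

definition lie_algebra :: "('a::euclidean_space \<Rightarrow> 'a \<Rightarrow> 'a) \<Rightarrow> bool" where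
  "lie_algebra br \<longleftrightarrow> bilinear br \<and> (\<forall>x. br x x = 0) \<and>
     (\<forall>x y z. br x (br y z) + br y (br z x) + br z (br x y) = 0)"

definition lie_center :: "('a::euclidean_space \<Rightarrow> 'a \<Rightarrow> 'a) \<Rightarrow> 'a set" where
  "lie_center br = {z. \<forall>x. br z x = 0}"

definition derived_algebra :: "('a::euclidean_space \<Rightarrow> 'a \<Rightarrow> 'a) \<Rightarrow> 'a set" where
  "derived_algebra br = span {br x y | x y. True}"

definition two_step_nilpotent :: "('a::euclidean_space \<Rightarrow> 'a \<Rightarrow> 'a) \<Rightarrow> bool" where
  "two_step_nilpotent br \<longleftrightarrow> lie_algebra br \<and> (\<forall>x y z. br x (br y z) = 0) \<and>
     (\<exists>x y. br x y \<noteq> 0)"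

definition abelian_complex_structure ::
  "('a::euclidean_space \<Rightarrow> 'a \<Rightarrow> 'a) \<Rightarrow> ('a \<Rightarrow> 'a) \<Rightarrow> bool" where
  "abelian_complex_structure br J \<longleftrightarrow> linear J \<and> (\<forall>x. J (J x) = - x) \<and>
     (\<forall>x y. br (J x) (J y) = br x y)"

end

theory Submission
  imports Defs
begin

text \<open>The centre \<open>Z\<close> of a Lie algebra \<open>L\<close> with abelian complex structure \<open>J\<close> is
  \<open>J\<close>-invariant, so \<open>J\<close> induces a complex structure on \<open>L/Z\<close> and, as \<open>n \<ge> 3\<close>, we can
  pick \<open>x, J x, y, J y\<close> independent modulo \<open>Z\<close> and extend them to a list
  \<open>e\<^sub>1, \<dots>, e\<^sub>n\<close> spanning \<open>L\<close> modulo \<open>Z\<close>. The derived algebra is spanned by the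
  \<open>n(n-1)/2\<close> brackets \<open>[e\<^sub>i, e\<^sub>j]\<close> with \<open>i < j\<close>, but two of them coincide because
  \<open>[J x, J y] = [x, y]\<close>, so \<open>2 dim [L, L] < n(n-1)\<close>.\<close>

lemma lie_algebra_bracket_antisym:
  assumes "lie_algebra br"
  shows "br u v = - br v u"
proof -
  have bl: "bilinear br" and alt: "\<And>x. br x x = 0"
    using assms unfolding lie_algebra_def by auto
  have "0 = br (u + v) (u + v)" using alt by simp
  also have "\<dots> = br u u + br u v + br v u + br v v"
    by (simp add: bilinear_ladd[OF bl] bilinear_radd[OF bl])
  finally show ?thesis using alt by (simp add: eq_neg_iff_add_eq_0)
qed

lemma bilinear_span_in_subspace:
  assumes bl: "bilinear br" and T: "subspace T"
    and gen: "\<And>u v. u \<in> A \<Longrightarrow> v \<in> A \<Longrightarrow> br u v \<in> T"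
    and u: "u \<in> span A" and v: "v \<in> span A"
  shows "br u v \<in> T"
proof -
  have right: "br u' v \<in> T" if "u' \<in> A" for u'
  proof -
    have "linear (br u')" using bl unfolding bilinear_def by blast
    then have "br u' ` span A = span (br u' ` A)" by (rule span_linear_image[symmetric])
    also have "\<dots> \<subseteq> T" using span_minimal[OF _ T] gen that by blast
    finally show ?thesis using v by blast
  qed
  have "linear (\<lambda>x. br x v)" using bl unfolding bilinear_def by blast
  then have "(\<lambda>x. br x v) ` span A = span ((\<lambda>x. br x v) ` A)" by (rule span_linear_image[symmetric])
  also have "\<dots> \<subseteq> T" by (rule span_minimal[OF _ T]) (auto intro: right)
  finally show ?thesis using u by blast
qed

lemma abelian_complex_structure_center_invariant:
  assumes "lie_algebra br" and "abelian_complex_structure br J"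
  shows "J ` lie_center br \<subseteq> lie_center br"
proof
  fix w assume "w \<in> J ` lie_center br"
  then obtain z where z: "z \<in> lie_center br" and w: "w = J z" by blast
  have bl: "bilinear br" using assms(1) unfolding lie_algebra_def by blast
  have JJ: "\<And>x. J (J x) = - x" and JB: "\<And>x y. br (J x) (J y) = br x y"
    using assms(2) unfolding abelian_complex_structure_def by blast+
  have "br (J z) x = 0" for x
  proof -
    have "br (J z) x = br (J (J z)) (J x)" by (rule JB[symmetric])
    also have "\<dots> = - br z (J x)" by (simp add: JJ bilinear_lneg[OF bl])
    finally show ?thesis using z unfolding lie_center_def by simp
  qed
  then show "w \<in> lie_center br" unfolding w lie_center_def by simp
qed

text \<open>If \<open>J y = m + k y\<close> with \<open>m\<close> in the invariant subspace, applying \<open>J\<close> once more gives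
  \<open>(1 + k\<^sup>2) y = - J m - k m\<close>, which lies in that subspace.\<close>

lemma complex_structure_not_in_span_insert:
  fixes J :: "'a::real_vector \<Rightarrow> 'a"
  assumes lin: "linear J" and JJ: "\<And>x. J (J x) = - x"
    and inv: "J ` G \<subseteq> span G" and y: "y \<notin> span G"
  shows "J y \<notin> span (insert y G)"
proof
  assume "J y \<in> span (insert y G)"
  then obtain k where m: "J y - k *\<^sub>R y \<in> span G" using span_breakdown_eq by blast
  define m where "m = J y - k *\<^sub>R y"
  have "J ` span G \<subseteq> span G"
    using span_linear_image[OF lin, of G] span_minimal[OF inv subspace_span] by simp
  then have Jm: "J m \<in> span G" using m m_def by blast
  have "J m = - y - k *\<^sub>R J y"
    unfolding m_def using JJ linear_diff[OF lin] linear_scale[OF lin] by simp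
  then have "(1 + k\<^sup>2) *\<^sub>R y = - J m - k *\<^sub>R m"
    unfolding m_def by (simp add: algebra_simps power2_eq_square)
  also have "\<dots> \<in> span G" using Jm m m_def by (simp add: span_diff span_neg span_scale)
  finally have "inverse (1 + k\<^sup>2) *\<^sub>R ((1 + k\<^sup>2) *\<^sub>R y) \<in> span G" by (rule span_scale)
  moreover have "1 + k\<^sup>2 \<noteq> 0" by (metis add_pos_nonneg zero_less_one zero_le_power2 less_irrefl)
  ultimately show False using y by simp
qed

lemma complex_structure_invariant_extend:
  fixes J :: "'a::euclidean_space \<Rightarrow> 'a"
  assumes lin: "linear J" and JJ: "\<And>x. J (J x) = - x"
    and inv: "J ` G \<subseteq> span G" and dim: "dim G < DIM('a)"
  obtains x where "dim (insert (J x) (insert x G)) = dim G + 2"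
    and "J ` insert (J x) (insert x G) \<subseteq> span (insert (J x) (insert x G))"
proof -
  have "span G \<noteq> UNIV" using dim dim_eq_full[of G] by simp
  then obtain x where x: "x \<notin> span G" by blast
  have Jx: "J x \<notin> span (insert x G)"
    by (rule complex_structure_not_in_span_insert[OF lin JJ inv x])
  let ?G = "insert (J x) (insert x G)"
  have "dim ?G = dim G + 2" using x Jx by (simp add: dim_insert)
  moreover have "J ` ?G \<subseteq> span ?G"
    using inv span_mono[of G ?G] by (auto simp: JJ span_base span_neg)
  ultimately show thesis by (rule that)
qed

lemma complex_structure_invariant_extend_twice:
  fixes J :: "'a::euclidean_space \<Rightarrow> 'a"
  assumes lin: "linear J" and JJ: "\<And>x. J (J x) = - x"
    and inv: "J ` G \<subseteq> span G" and dim: "dim G + 2 < DIM('a)"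
  obtains x y where "dim (insert (J y) (insert y (insert (J x) (insert x G)))) = dim G + 4"
proof -
  have "dim G < DIM('a)" using dim by linarith
  then obtain x where dim2: "dim (insert (J x) (insert x G)) = dim G + 2"
    and inv2: "J ` insert (J x) (insert x G) \<subseteq> span (insert (J x) (insert x G))"
    by (rule complex_structure_invariant_extend[OF lin JJ inv])
  have "dim (insert (J x) (insert x G)) < DIM('a)" using dim dim2 by linarith
  then obtain y where "dim (insert (J y) (insert y (insert (J x) (insert x G)))) = dim G + 2 + 2"
    unfolding dim2[symmetric] by (rule complex_structure_invariant_extend[OF lin JJ inv2])
  then have "dim (insert (J y) (insert y (insert (J x) (insert x G)))) = dim G + 4"
    by (simp only: add.assoc flip: numeral_Bit0)
  then show thesis by (rule that)
qed

lemma exists_spanning_extension_list: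
  fixes G :: "'a::euclidean_space set"
  obtains rs where "length rs = DIM('a) - dim G" and "span (G \<union> set rs) = UNIV"
proof -
  obtain B' where B': "B' \<subseteq> G" "independent B'" "G \<subseteq> span B'" "card B' = dim G"
    using basis_exists by blast
  obtain B where B: "B' \<subseteq> B" "independent B" "UNIV \<subseteq> span B"
    using maximal_independent_subset_extend[of B' UNIV] B' by auto
  have finB: "finite B" using independent_bound[OF B(2)] by blast
  have "card B = DIM('a)"
    using dim_eq_full[of B] B(3) dim_eq_card_independent[OF B(2)] by auto
  then have cR: "card (B - B') = DIM('a) - dim G"
    using card_Diff_subset[OF finite_subset[OF B(1) finB] B(1)] B'(4) by simp
  obtain rs where rs: "set rs = B - B'" "distinct rs"
    using finite_distinct_list[of "B - B'"] finB by auto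
  have "B \<subseteq> span (G \<union> set rs)" using B'(1) rs(1) by (auto intro: span_base)
  then have "span B \<subseteq> span (G \<union> set rs)" by (rule span_minimal[OF _ subspace_span])
  then have "span (G \<union> set rs) = UNIV" using B(3) by auto
  moreover have "length rs = DIM('a) - dim G" using distinct_card[OF rs(2)] rs(1) cR by simp
  ultimately show thesis by (rule that[rotated])
qed

lemma card_ordered_pairs_less: "2 * card {(i::nat, j). i < j \<and> j < n} = n * (n - 1)"
proof (induction n)
  case 0
  then show ?case by simp
next
  case (Suc n)
  have eq: "{(i::nat, j). i < j \<and> j < Suc n} = {(i, j). i < j \<and> j < n} \<union> (\<lambda>i. (i, n)) ` {..<n}"
    by auto
  have fin: "finite {(i::nat, j). i < j \<and> j < n}"
    by (rule finite_subset[of _ "{..<n} \<times> {..<n}"]) auto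
  have "card {(i::nat, j). i < j \<and> j < Suc n} = card {(i, j). i < j \<and> j < n} + n"
    unfolding eq by (subst card_Un_disjoint) (auto simp: fin card_image inj_on_def)
  then show ?case using Suc by (cases n) (auto simp: algebra_simps)
qed

lemma derived_algebra_subset_span_brackets:
  assumes lie: "lie_algebra br" and spanning: "span (lie_center br \<union> set es) = UNIV"
  shows "derived_algebra br \<subseteq>
    span ((\<lambda>(i, j). br (es ! i) (es ! j)) ` {(i, j). i < j \<and> j < length es})"
    (is "_ \<subseteq> span ?S")
proof -
  have bl: "bilinear br" and alt: "\<And>x. br x x = 0"
    using lie unfolding lie_algebra_def by auto
  have gen: "br u v \<in> span ?S"
    if uv: "u \<in> lie_center br \<union> set es" "v \<in> lie_center br \<union> set es" for u v
  proof -
    consider "u \<in> lie_center br" | "v \<in> lie_center br" | "u \<in> set es" "v \<in> set es"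
      using uv by blast
    then show ?thesis
    proof cases
      case 1
      then show ?thesis unfolding lie_center_def by (simp add: span_zero)
    next
      case 2
      then show ?thesis using lie_algebra_bracket_antisym[OF lie, of u v]
        unfolding lie_center_def by (simp add: span_zero)
    next
      case 3
      then obtain i j where ij: "i < length es" "j < length es" "u = es ! i" "v = es ! j"
        by (auto simp: in_set_conv_nth)
      consider "i < j" | "i = j" | "j < i" by linarith
      then show ?thesis
      proof cases
        case 1
        then show ?thesis using ij by (auto intro!: span_base)
      next
        case 2
        then show ?thesis using ij alt by (simp add: span_zero)
      next
        case 3
        then have "br v u \<in> span ?S" using ij by (auto intro!: span_base)
        then show ?thesis using lie_algebra_bracket_antisym[OF lie, of u v] by (simp add: span_neg)
      qed
    qed
  qed
  have "br u v \<in> span ?S" for u v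
    using bilinear_span_in_subspace[OF bl subspace_span gen] spanning by blast
  then show ?thesis unfolding derived_algebra_def by (intro span_minimal subspace_span) blast
qed

lemma derived_algebra_dim_less_pairs:
  assumes lie: "lie_algebra br" and spanning: "span (lie_center br \<union> set es) = UNIV"
    and pairs: "i < j" "k < l" "j < length es" "l < length es" "(i, j) \<noteq> (k, l)"
    and coincide: "br (es ! i) (es ! j) = br (es ! k) (es ! l)"
  shows "2 * dim (derived_algebra br) < length es * (length es - 1)"
proof -
  define P where "P = {(i, j). i < j \<and> j < length es}"
  define f where "f = (\<lambda>(i, j). br (es ! i) (es ! j))"
  have finP: "finite P" unfolding P_def
    by (rule finite_subset[of _ "{..<length es} \<times> {..<length es}"]) auto
  have "dim (derived_algebra br) \<le> card (f ` P)"
    using derived_algebra_subset_span_brackets[OF lie spanning] finP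
    by (intro dim_le_card) (auto simp: P_def f_def)
  moreover have "(i, j) \<in> P" "(k, l) \<in> P" "f (i, j) = f (k, l)"
    using pairs coincide unfolding P_def f_def by auto
  then have "\<not> inj_on f P" using pairs(5) inj_onD by metis
  then have "card (f ` P) < card P"
    using inj_on_iff_eq_card[OF finP] card_image_le[OF finP] le_neq_implies_less by blast
  ultimately show ?thesis using card_ordered_pairs_less[of "length es"] unfolding P_def by linarith
qed

theorem mainTheorem14:
  fixes br :: "'a::euclidean_space \<Rightarrow> 'a \<Rightarrow> 'a" and n :: nat
  assumes "two_step_nilpotent br"
    and "n = DIM('a) - dim (lie_center br)"
    and "n \<ge> 3"
    and "2 * dim (derived_algebra br) = n * (n - 1)"
  shows "\<not> (\<exists>J. abelian_complex_structure br J)"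
proof
  assume "\<exists>J. abelian_complex_structure br J"
  then obtain J where J: "abelian_complex_structure br J" by blast
  then have lin: "linear J" and JJ: "\<And>x. J (J x) = - x" and JB: "\<And>x y. br (J x) (J y) = br x y"
    unfolding abelian_complex_structure_def by blast+
  have lie: "lie_algebra br" using assms(1) unfolding two_step_nilpotent_def by blast
  let ?Z = "lie_center br"
  have "J ` ?Z \<subseteq> span ?Z"
    using abelian_complex_structure_center_invariant[OF lie J] span_superset by blast
  moreover have "dim ?Z + 2 < DIM('a)" using assms(2,3) by linarith
  ultimately obtain x y
    where dimG: "dim (insert (J y) (insert y (insert (J x) (insert x ?Z)))) = dim ?Z + 4"
    by (rule complex_structure_invariant_extend_twice[OF lin JJ])
  let ?G = "insert (J y) (insert y (insert (J x) (insert x ?Z)))"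
  have "dim ?G \<le> DIM('a)" by (rule dim_subset_UNIV)
  then have n4: "n \<ge> 4" using dimG assms(2) by linarith
  obtain rs where len_rs: "length rs = DIM('a) - dim ?G" and span_rs: "span (?G \<union> set rs) = UNIV"
    by (rule exists_spanning_extension_list)
  define es where "es = [x, J x, y, J y] @ rs"
  have len: "length es = n" unfolding es_def using len_rs dimG n4 assms(2) by simp
  have spanning: "span (?Z \<union> set es) = UNIV"
    using span_rs unfolding es_def by (simp add: insert_commute)
  have "br (es ! 0) (es ! 2) = br (es ! 1) (es ! 3)" unfolding es_def by (simp add: JB)
  then have "2 * dim (derived_algebra br) < n * (n - 1)"
    using derived_algebra_dim_less_pairs[OF lie spanning, of 0 2 1 3] n4 len by simp
  then show False using assms(4) by simp
qed

end
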